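(* Let $V$ be a finite set and $d$ a metric on $V$ (nonnegative, symmetric, satisfying the triangle inequality). For a rooted binary tree $T$ whose leaves are in bijection with $V$, let $R_T(V)=\sum_{\{i,j\}\subseteq V}d(i,j)\,|\mathrm{leaves}(T[i\vee j])|$. Then for every such tree $T$, $R_T(V)\ge\frac12\max_{T'}R_{T'}(V)$, the maximum being over all such trees $T'$.
   Context: $T[i\vee j]$ denotes the subtree of $T$ rooted at the least common ancestor of the leaves $i$ and $j$, and $|\mathrm{leaves}(T[i\vee j])|$ is its number of leaves. The sum is over unordered pairs of distinct elements. *)

theory Defs
  imports Complex_Main
begin

datatype 'a btree = Leaf 'a | Node "'a btree" "'a btree"

fun leaves :: "'a btree \<Rightarrow> 'a list" where
  "leaves (Leaf a) = [a]"
| "leaves (Node l r) = leaves l @ leaves r"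

definition tree_on :: "'a set \<Rightarrow> 'a btree \<Rightarrow> bool" where
  "tree_on V T \<longleftrightarrow> distinct (leaves T) \<and> set (leaves T) = V"

fun lca_leaves :: "'a btree \<Rightarrow> 'a \<Rightarrow> 'a \<Rightarrow> nat" where
  "lca_leaves (Leaf a) i j = 1"
| "lca_leaves (Node l r) i j =
     (if i \<in> set (leaves l) \<and> j \<in> set (leaves l) then lca_leaves l i j
      else if i \<in> set (leaves r) \<and> j \<in> set (leaves r) then lca_leaves r i j
      else length (leaves (Node l r)))"

text \<open>R_T(V): sum over unordered pairs {i,j} of distinct elements, written as half the
  sum over ordered pairs (the summand is symmetric).\<close>
definition revenue :: "('a \<Rightarrow> 'a \<Rightarrow> real) \<Rightarrow> 'a set \<Rightarrow> 'a btree \<Rightarrow> real" where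
  "revenue d V T = (1/2) * (\<Sum>(i,j) \<in> {(i,j). i \<in> V \<and> j \<in> V \<and> i \<noteq> j}.
                        d i j * real (lca_leaves T i j))"

end

theory Submission
  imports Defs
begin

text \<open>With \<open>D\<close> the sum of \<open>d\<close> over ordered pairs of distinct points and
  \<open>n = |V|\<close>, every tree has \<open>R_T(V) \<le> n D / 2\<close> because no subtree has more than \<open>n\<close>
  leaves. Conversely \<open>R_T(V) \<ge> n D / 4\<close> by induction on \<open>T = Node l r\<close>: the pairs split
  by the root are charged \<open>|T|\<close>, and the triangle inequality \<open>d i i' \<le> d i j + d j i'\<close>,
  summed over \<open>i, i'\<close> in \<open>l\<close> and \<open>j\<close> in \<open>r\<close>, bounds the distances inside \<open>l\<close> by
  the distances across the root.\<close>

lemma length_leaves_pos: "0 < length (leaves t)"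
  by (induction t) auto

lemma lca_leaves_le_length: "lca_leaves t i j \<le> length (leaves t)"
  by (induction t) auto

lemma finite_trees_bounded_leaves:
  assumes "finite V"
  shows "finite {t. set (leaves t) \<subseteq> V \<and> length (leaves t) \<le> n}"
proof (induction n)
  case 0
  have "{t. set (leaves t) \<subseteq> V \<and> length (leaves t) \<le> 0} = {}"
    using length_leaves_pos by (auto simp: not_le[symmetric])
  then show ?case by (metis finite.emptyI)
next
  case (Suc n)
  let ?B = "{t. set (leaves t) \<subseteq> V \<and> length (leaves t) \<le> n}"
  have "{t. set (leaves t) \<subseteq> V \<and> length (leaves t) \<le> Suc n}
      \<subseteq> Leaf ` V \<union> case_prod Node ` (?B \<times> ?B)"
  proof
    fix t assume t: "t \<in> {t. set (leaves t) \<subseteq> V \<and> length (leaves t) \<le> Suc n}"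
    show "t \<in> Leaf ` V \<union> case_prod Node ` (?B \<times> ?B)"
    proof (cases t)
      case (Leaf a)
      then show ?thesis using t by auto
    next
      case (Node l r)
      have "1 \<le> length (leaves l)" "1 \<le> length (leaves r)"
        using length_leaves_pos[of l] length_leaves_pos[of r] by linarith+
      then have "l \<in> ?B" "r \<in> ?B"
        using t Node by auto
      then show ?thesis using Node by auto
    qed
  qed
  moreover have "finite (Leaf ` V \<union> case_prod Node ` (?B \<times> ?B))"
    using Suc assms by auto
  ultimately show ?case by (rule finite_subset)
qed

lemma finite_tree_on: "finite V \<Longrightarrow> finite {T. tree_on V T}"
  by (rule finite_subset[OF _ finite_trees_bounded_leaves[of V "card V"]])
     (auto simp: tree_on_def distinct_card[symmetric])

lemma double_sum_Un_disjoint: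
  fixes g :: "'a \<Rightarrow> 'a \<Rightarrow> 'b::comm_monoid_add"
  assumes "finite A" "finite B" "A \<inter> B = {}"
  shows "(\<Sum>i\<in>A \<union> B. \<Sum>j\<in>A \<union> B. g i j) =
    (\<Sum>i\<in>A. \<Sum>j\<in>A. g i j) + (\<Sum>i\<in>B. \<Sum>j\<in>B. g i j)
      + ((\<Sum>i\<in>A. \<Sum>j\<in>B. g i j) + (\<Sum>i\<in>B. \<Sum>j\<in>A. g i j))"
  using assms by (simp add: sum.union_disjoint sum.distrib ac_simps)

lemma triangle_sum_within_le_across:
  fixes e :: "'a \<Rightarrow> 'a \<Rightarrow> real"
  assumes "A \<union> B \<subseteq> V"
    and tri: "\<And>i j k. i \<in> V \<Longrightarrow> j \<in> V \<Longrightarrow> k \<in> V \<Longrightarrow> e i k \<le> e i j + e j k"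
  shows "real (card B) * (\<Sum>i\<in>A. \<Sum>i'\<in>A. e i i')
    \<le> real (card A) * ((\<Sum>i\<in>A. \<Sum>j\<in>B. e i j) + (\<Sum>j\<in>B. \<Sum>i\<in>A. e j i))"
proof -
  have "real (card B) * (\<Sum>i\<in>A. \<Sum>i'\<in>A. e i i')
      = (\<Sum>i\<in>A. \<Sum>i'\<in>A. \<Sum>j\<in>B. e i i')"
    by (simp add: sum_distrib_left)
  also have "\<dots> \<le> (\<Sum>i\<in>A. \<Sum>i'\<in>A. \<Sum>j\<in>B. e i j + e j i')"
    using assms by (intro sum_mono tri) auto
  also have "\<dots> = real (card A) * (\<Sum>i\<in>A. \<Sum>j\<in>B. e i j)
      + (\<Sum>i\<in>A. \<Sum>i'\<in>A. \<Sum>j\<in>B. e j i')"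
    by (simp add: sum.distrib sum_distrib_left)
  also have "(\<Sum>i\<in>A. \<Sum>i'\<in>A. \<Sum>j\<in>B. e j i')
      = real (card A) * (\<Sum>j\<in>B. \<Sum>i\<in>A. e j i)"
    using sum.swap[of "\<lambda>i' j. e j i'" B A] by simp
  finally show ?thesis by (simp add: algebra_simps)
qed

lemma lca_weighted_sum_lower_bound:
  fixes e :: "'a \<Rightarrow> 'a \<Rightarrow> real"
  assumes tri: "\<And>i j k. i \<in> V \<Longrightarrow> j \<in> V \<Longrightarrow> k \<in> V \<Longrightarrow> e i k \<le> e i j + e j k"
    and diag: "\<And>i. i \<in> V \<Longrightarrow> e i i = 0"
    and "distinct (leaves t)" "set (leaves t) \<subseteq> V"
  shows "real (length (leaves t)) / 2 * (\<Sum>i\<in>set (leaves t). \<Sum>j\<in>set (leaves t). e i j)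
    \<le> (\<Sum>i\<in>set (leaves t). \<Sum>j\<in>set (leaves t). e i j * real (lca_leaves t i j))"
  using assms(3,4)
proof (induction t)
  case (Leaf a)
  then show ?case by (simp add: diag)
next
  case (Node l r)
  define L R where "L = set (leaves l)" and "R = set (leaves r)"
  define a b where "a = length (leaves l)" and "b = length (leaves r)"
  define DL DR where "DL = (\<Sum>i\<in>L. \<Sum>j\<in>L. e i j)" and "DR = (\<Sum>i\<in>R. \<Sum>j\<in>R. e i j)"
  define C where "C = (\<Sum>i\<in>L. \<Sum>j\<in>R. e i j) + (\<Sum>i\<in>R. \<Sum>j\<in>L. e i j)"
  let ?lca = "lca_leaves (Node l r)"
  have fin: "finite L" "finite R" by (simp_all add: L_def R_def)
  have disj: "L \<inter> R = {}" and sub: "L \<union> R \<subseteq> V"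
    using Node.prems by (auto simp: L_def R_def)
  have card: "card L = a" "card R = b"
    using Node.prems by (simp_all add: L_def R_def a_def b_def distinct_card)
  have IH: "real a / 2 * DL \<le> (\<Sum>i\<in>L. \<Sum>j\<in>L. e i j * real (lca_leaves l i j))"
           "real b / 2 * DR \<le> (\<Sum>i\<in>R. \<Sum>j\<in>R. e i j * real (lca_leaves r i j))"
    using Node by (auto simp: L_def R_def a_def b_def DL_def DR_def)
  have within: "real b * DL \<le> real a * C" "real a * DR \<le> real b * C"
    using triangle_sum_within_le_across[OF _ tri, of L R]
      triangle_sum_within_le_across[OF _ tri, of R L] sub card
    by (simp_all add: DL_def DR_def C_def ac_simps)
  have split_lca: "(\<Sum>i\<in>L \<union> R. \<Sum>j\<in>L \<union> R. e i j * real (?lca i j))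
      = (\<Sum>i\<in>L. \<Sum>j\<in>L. e i j * real (lca_leaves l i j))
        + (\<Sum>i\<in>R. \<Sum>j\<in>R. e i j * real (lca_leaves r i j)) + real (a + b) * C"
  proof -
    have "(\<Sum>i\<in>L. \<Sum>j\<in>L. e i j * real (?lca i j))
        = (\<Sum>i\<in>L. \<Sum>j\<in>L. e i j * real (lca_leaves l i j))"
      by (intro sum.cong refl) (simp add: L_def)
    moreover have "(\<Sum>i\<in>R. \<Sum>j\<in>R. e i j * real (?lca i j))
        = (\<Sum>i\<in>R. \<Sum>j\<in>R. e i j * real (lca_leaves r i j))"
      using disj by (intro sum.cong refl) (auto simp: L_def R_def)
    moreover have "(\<Sum>i\<in>A. \<Sum>j\<in>B. e i j * real (?lca i j))
        = real (a + b) * (\<Sum>i\<in>A. \<Sum>j\<in>B. e i j)"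
      if "A = L \<and> B = R \<or> A = R \<and> B = L" for A B
      unfolding sum_distrib_left using that disj
      by (intro sum.cong refl) (auto simp: L_def R_def a_def b_def)
    ultimately show ?thesis
      unfolding double_sum_Un_disjoint[OF fin disj] C_def by (simp add: distrib_left)
  qed
  have split_e: "(\<Sum>i\<in>L \<union> R. \<Sum>j\<in>L \<union> R. e i j) = DL + DR + C"
    unfolding double_sum_Un_disjoint[OF fin disj] DL_def DR_def C_def ..
  have leaves_Node: "set (leaves (Node l r)) = L \<union> R" "length (leaves (Node l r)) = a + b"
    by (simp_all add: L_def R_def a_def b_def)
  show ?case
    unfolding leaves_Node split_lca split_e using IH within by (simp add: algebra_simps)
qed

lemma lca_weighted_sum_upper_bound:
  fixes e :: "'a \<Rightarrow> 'a \<Rightarrow> real"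
  assumes "\<And>i j. i \<in> A \<Longrightarrow> j \<in> A \<Longrightarrow> 0 \<le> e i j"
  shows "(\<Sum>i\<in>A. \<Sum>j\<in>A. e i j * real (lca_leaves t i j))
    \<le> real (length (leaves t)) * (\<Sum>i\<in>A. \<Sum>j\<in>A. e i j)"
proof -
  have "(\<Sum>i\<in>A. \<Sum>j\<in>A. e i j * real (lca_leaves t i j))
      \<le> (\<Sum>i\<in>A. \<Sum>j\<in>A. e i j * real (length (leaves t)))"
    using assms lca_leaves_le_length by (intro sum_mono mult_left_mono) auto
  then show ?thesis by (simp add: sum_distrib_left sum_distrib_right mult.commute)
qed

text \<open>The hypotheses allow \<open>d i i > 0\<close>; \<open>revenue\<close> ignores the diagonal, so it is zeroed here.\<close>
definition off_diag :: "('a \<Rightarrow> 'a \<Rightarrow> real) \<Rightarrow> 'a \<Rightarrow> 'a \<Rightarrow> real" where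
  "off_diag d i j = (if i = j then 0 else d i j)"

lemma revenue_eq_off_diag_sum:
  assumes "finite V"
  shows "revenue d V T = 1/2 * (\<Sum>i\<in>V. \<Sum>j\<in>V. off_diag d i j * real (lca_leaves T i j))"
proof -
  have "(\<Sum>(i,j) \<in> {(i,j). i \<in> V \<and> j \<in> V \<and> i \<noteq> j}. d i j * real (lca_leaves T i j))
      = (\<Sum>(i,j) \<in> V \<times> V. off_diag d i j * real (lca_leaves T i j))"
    by (rule sum.mono_neutral_cong_left) (auto simp: assms off_diag_def)
  then show ?thesis by (simp add: revenue_def sum.cartesian_product)
qed

lemma revenue_upper_bound:
  assumes "finite V" "\<And>i j. i \<in> V \<Longrightarrow> j \<in> V \<Longrightarrow> 0 \<le> d i j" "tree_on V T"
  shows "revenue d V T \<le> real (card V) / 2 * (\<Sum>i\<in>V. \<Sum>j\<in>V. off_diag d i j)"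
proof -
  have "length (leaves T) = card V"
    using assms(3) by (simp add: tree_on_def distinct_card[symmetric])
  moreover have "0 \<le> off_diag d i j" if "i \<in> V" "j \<in> V" for i j
    using assms(2) that by (simp add: off_diag_def)
  ultimately show ?thesis
    using lca_weighted_sum_upper_bound[of V "off_diag d" T]
    unfolding revenue_eq_off_diag_sum[OF assms(1)] by simp
qed

lemma revenue_lower_bound:
  assumes "finite V"
    and nonneg: "\<And>i j. i \<in> V \<Longrightarrow> j \<in> V \<Longrightarrow> 0 \<le> d i j"
    and tri: "\<And>i j k. i \<in> V \<Longrightarrow> j \<in> V \<Longrightarrow> k \<in> V \<Longrightarrow> d i k \<le> d i j + d j k"
    and T: "tree_on V T"
  shows "real (card V) / 4 * (\<Sum>i\<in>V. \<Sum>j\<in>V. off_diag d i j) \<le> revenue d V T"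
proof -
  have off_diag_tri: "off_diag d i k \<le> off_diag d i j + off_diag d j k"
    if "i \<in> V" "j \<in> V" "k \<in> V" for i j k
    using that nonneg tri[of i j k] by (simp add: off_diag_def)
  have off_diag_diag: "off_diag d i i = 0" for i
    by (simp add: off_diag_def)
  have leaves_T: "set (leaves T) = V" "length (leaves T) = card V" "distinct (leaves T)"
    using T by (auto simp: tree_on_def distinct_card[symmetric])
  show ?thesis
    using lca_weighted_sum_lower_bound[OF off_diag_tri off_diag_diag leaves_T(3)] leaves_T(1,2)
    unfolding revenue_eq_off_diag_sum[OF assms(1)] by simp
qed

theorem mainTheorem13:
  fixes V :: "'a set" and d :: "'a \<Rightarrow> 'a \<Rightarrow> real" and T :: "'a btree"
  assumes "finite V"
    and "\<And>i j. i \<in> V \<Longrightarrow> j \<in> V \<Longrightarrow> d i j \<ge> 0"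
    and "\<And>i j. i \<in> V \<Longrightarrow> j \<in> V \<Longrightarrow> d i j = d j i"
    and "\<And>i j k. i \<in> V \<Longrightarrow> j \<in> V \<Longrightarrow> k \<in> V \<Longrightarrow> d i k \<le> d i j + d j k"
    and "tree_on V T"
  shows "revenue d V T \<ge> (1/2) * Max (revenue d V ` {T'. tree_on V T'})"
proof -
  let ?revenues = "revenue d V ` {T'. tree_on V T'}"
  have "finite ?revenues" "?revenues \<noteq> {}"
    using finite_tree_on[OF assms(1)] assms(5) by auto
  then have "Max ?revenues \<in> ?revenues"
    by (rule Max_in)
  then obtain T' where "tree_on V T'" "Max ?revenues = revenue d V T'"
    by auto
  then show ?thesis
    using revenue_upper_bound[of V d T', OF assms(1,2)] revenue_lower_bound[of V d T, OF assms(1,2,4,5)]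
    by linarith
qed

end
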